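(* Let $0<p<2$, let $G=(V,E)$ be a graph with $V=\{1,\dots,n\}$, and let $c$ be a real number. Consider the optimization problem $\tilde{F}_{BS}^{p}$ in the variables of a symmetric matrix $Z=[z_{ij}]_{i,j=1}^n$: $$\min \ \frac{1}{2^{p/2}}\sum_{\{i,j\}\in E} z_{ij}^{p/2}$$ subject to $$z_{ij}^{p/2}+z_{jk}^{p/2}\ge z_{ik}^{p/2}\quad \forall i,j,k,\qquad \sum_{i<j} z_{ij}\ge c(1-c)n^2,\qquad z_{ii}=0\ \ \forall i,\qquad \mathbf{1}-Z\succeq 0,$$ where $\mathbf{1}$ is the $n\times n$ matrix with all entries equal to $1$. Then $\tilde{F}_{BS}^{p}$ is a concave program: its objective function is concave and its feasible set is convex.
   Context: A concave program is an optimization problem of the form $\min_{x\in C} f(x)$ where $C\subseteq\mathbb{R}^d$ is a convex set and $f$ is a concave function (i.e. $f(\lambda x+(1-\lambda)y)\ge \lambda f(x)+(1-\lambda)f(y)$ for all $x,y$ in its convex domain and $\lambda\in[0,1]$). The variables $z_{ij}$ are understood to be nonnegative reals, so that $z^{p/2}$ is defined; $M\succeq 0$ means $M$ is positive semidefinite. *)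

theory Defs
  imports "HOL-Analysis.Analysis"
begin

text \<open>Vertices are the elements of a finite linearly ordered type 'n (playing the role of
  {1,...,n}, with n = CARD('n)); n x n real matrices are elements of real^'n^'n.\<close>

definition psd :: "real^'n^'n \<Rightarrow> bool" where
  "psd M \<longleftrightarrow> transpose M = M \<and> (\<forall>x::real^'n. 0 \<le> x \<bullet> (M *v x))"

definition ones_mat :: "real^'n^'n" where
  "ones_mat = (\<chi> i j. 1)"

definition sym_nonneg :: "(real^'n^'n) set" where
  "sym_nonneg = {Z. (\<forall>i j. 0 \<le> Z $ i $ j \<and> Z $ i $ j = Z $ j $ i)}"

definition FBS_obj :: "real \<Rightarrow> ('n::{finite,linorder}) set set \<Rightarrow> real^('n::{finite,linorder})^('n::{finite,linorder}) \<Rightarrow> real" where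
  "FBS_obj p E Z = (1 / 2 powr (p/2)) *
      (\<Sum>(i,j)\<in>{(i,j). i < j \<and> {i,j} \<in> E}. (Z $ i $ j) powr (p/2))"

definition FBS_feasible :: "real \<Rightarrow> real \<Rightarrow> (real^('n::{finite,linorder})^('n::{finite,linorder})) set" where
  "FBS_feasible p c = {Z \<in> sym_nonneg.
      (\<forall>i j k. (Z $ i $ j) powr (p/2) + (Z $ j $ k) powr (p/2) \<ge> (Z $ i $ k) powr (p/2))
    \<and> (\<Sum>(i,j)\<in>{(i,j). i < j}. Z $ i $ j) \<ge> c * (1 - c) * (real CARD('n))^2
    \<and> (\<forall>i. Z $ i $ i = 0)
    \<and> psd (ones_mat - Z)}"

end

theory Submission imports Defs begin

text \<open>Concavity of the objective is concavity of x \<mapsto> x powr q on [0,\<infinity>) for q = p/2 \<le> 1,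
  composed with the linear coordinate maps Z \<mapsto> z_ij. The feasible set is an intersection
  of preimages of convex sets under linear maps; the only non-obvious one is the set of
  nonnegative (a, b, c) with c^q \<le> a^q + b^q. Dividing by c maps it onto the superlevel set
  {1 \<le> x^q + y^q} of a concave function, and since the constraint is homogeneous, a convex
  combination of two such points rescales to a convex combination of their normalisations.\<close>

lemma concave_on_powr_pos:
  assumes "0 \<le> q" "q \<le> 1"
  shows "concave_on {0<..} (\<lambda>x::real. x powr q)"
proof (rule f''_le0_imp_concave[where f'="\<lambda>x. q * x powr (q - 1)"
                                  and f''="\<lambda>x. q * (q - 1) * x powr (q - 2)"])
  fix x :: real assume "x \<in> {0<..}"
  then have x: "x > 0" by simp
  show "DERIV (\<lambda>x. x powr q) x :> q * x powr (q - 1)"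
    using x by (auto intro!: derivative_eq_intros)
  show "DERIV (\<lambda>x. q * x powr (q - 1)) x :> q * (q - 1) * x powr (q - 2)"
    using x by (auto intro!: derivative_eq_intros simp: algebra_simps)
  show "q * (q - 1) * x powr (q - 2) \<le> 0"
    using assms by (intro mult_nonpos_nonneg mult_nonneg_nonpos) auto
qed simp

lemma concave_on_powr:
  assumes "0 \<le> q" "q \<le> 1"
  shows "concave_on {0..} (\<lambda>x::real. x powr q)"
proof (rule concave_on_linorderI)
  fix t x y :: real
  assume t: "0 < t" "t < 1" and x: "x \<in> {0..}" and "y \<in> {0..}" "x < y"
  then have y: "0 < y" by simp
  show "(1 - t) * x powr q + t * y powr q \<le> ((1 - t) *\<^sub>R x + t *\<^sub>R y) powr q"
  proof (cases "x = 0")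
    case True
    have "t = t powr 1" using t by simp
    also have "\<dots> \<le> t powr q" using t assms by (intro powr_mono') auto
    finally have "t * y powr q \<le> t powr q * y powr q" by (simp add: mult_right_mono)
    with True t y show ?thesis by (simp add: powr_mult)
  next
    case False
    with x have "x \<in> {0<..}" by simp
    with concave_onD[OF concave_on_powr_pos[OF assms], of t x y] t y show ?thesis by simp
  qed
qed simp

lemma concave_on_compose_linear:
  assumes "linear g" "concave_on S f" "convex T" "g ` T \<subseteq> S"
  shows "concave_on T (\<lambda>x. f (g x))"
  using assms unfolding concave_on_iff by (auto simp: linear_add linear_scale image_subset_iff)

lemma concave_on_sum_fun:
  assumes "finite A" "convex S" "\<And>a. a \<in> A \<Longrightarrow> concave_on S (f a)"
  shows "concave_on S (\<lambda>x. \<Sum>a\<in>A. f a x)"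
  using assms by (induction A rule: finite_induct) (auto simp: concave_on_const intro: concave_on_add)

lemma convex_sym_nonneg: "convex sym_nonneg"
  unfolding convex_def sym_nonneg_def by auto

lemma concave_on_FBS_obj:
  fixes E :: "'n::{finite,linorder} set set"
  assumes "0 \<le> p" "p \<le> 2"
  shows "concave_on sym_nonneg (FBS_obj p E)"
proof -
  have entry: "concave_on sym_nonneg (\<lambda>Z. (Z $ i $ j) powr (p / 2))" for i j :: 'n
    by (rule concave_on_compose_linear[OF _ concave_on_powr convex_sym_nonneg])
      (use assms in \<open>auto intro: linearI simp: sym_nonneg_def\<close>)
  have "concave_on sym_nonneg
          (\<lambda>Z. \<Sum>(i, j)\<in>{(i, j). i < j \<and> {i, j} \<in> E}. (Z $ i $ j) powr (p / 2))"
    by (rule concave_on_sum_fun) (auto simp: convex_sym_nonneg entry)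
  then show ?thesis
    unfolding FBS_obj_def by (rule concave_on_cmul[rotated]) simp
qed

lemma powr_triangle_scale:
  fixes q t a b c :: real
  assumes "0 \<le> t" "0 \<le> a" "0 \<le> b" "0 \<le> c" "c powr q \<le> a powr q + b powr q"
  shows "(t * c) powr q \<le> (t * a) powr q + (t * b) powr q"
proof -
  have "(t * c) powr q = t powr q * c powr q" using assms by (simp add: powr_mult)
  also have "\<dots> \<le> t powr q * (a powr q + b powr q)" using assms by (simp add: mult_left_mono)
  also have "\<dots> = (t * a) powr q + (t * b) powr q" using assms by (simp add: powr_mult algebra_simps)
  finally show ?thesis .
qed

lemma powr_triangle_mono:
  fixes q t a b c a' b' :: real
  assumes "0 \<le> q" "0 \<le> t" "0 \<le> a" "0 \<le> b" "0 \<le> c" "0 \<le> a'" "0 \<le> b'"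
    and "c powr q \<le> a powr q + b powr q"
  shows "(t * c) powr q \<le> (a' + t * a) powr q + (b' + t * b) powr q"
proof -
  have "(t * c) powr q \<le> (t * a) powr q + (t * b) powr q"
    using assms by (intro powr_triangle_scale) auto
  also have "\<dots> \<le> (a' + t * a) powr q + (b' + t * b) powr q"
    using assms by (intro add_mono powr_mono2) auto
  finally show ?thesis .
qed

lemma convex_powr_triangle:
  fixes q :: real
  assumes q: "0 \<le> q" "q \<le> 1"
  shows "convex {(a, b, c). 0 \<le> a \<and> 0 \<le> b \<and> 0 \<le> c \<and> c powr q \<le> a powr q + b powr q}"
proof (rule convexI, clarsimp)
  fix a1 b1 c1 a2 b2 c2 s t :: real
  assume nn: "0 \<le> a1" "0 \<le> b1" "0 \<le> c1" "0 \<le> a2" "0 \<le> b2" "0 \<le> c2"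
    and h1: "c1 powr q \<le> a1 powr q + b1 powr q" and h2: "c2 powr q \<le> a2 powr q + b2 powr q"
    and st: "0 \<le> s" "0 \<le> t" "s + t = 1"
  define A where "A = s * a1 + t * a2"
  define B where "B = s * b1 + t * b2"
  define C where "C = s * c1 + t * c2"
  have "C powr q \<le> A powr q + B powr q"
  proof (cases "c1 = 0 \<or> c2 = 0")
    case True
    then show ?thesis
    proof
      assume "c1 = 0"
      then show ?thesis unfolding A_def B_def C_def
        using powr_triangle_mono[OF q(1) st(2) nn(4-6) _ _ h2, of "s * a1" "s * b1"] nn st by simp
    next
      assume "c2 = 0"
      then show ?thesis unfolding A_def B_def C_def
        using powr_triangle_mono[OF q(1) st(1) nn(1-3) _ _ h1, of "t * a2" "t * b2"] nn st
        by (simp add: add.commute)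
    qed
  next
    case False
    with nn have c: "0 < c1" "0 < c2" by auto
    with st have C: "0 < C" unfolding C_def
      by (cases "s = 0") (auto intro: add_pos_nonneg)
    define l where "l = s * c1 / C"
    have l: "0 \<le> l" "l \<le> 1" "1 - l = t * c2 / C"
      using nn st C by (auto simp: l_def C_def field_simps)
    have comb: "l * (x1 / c1) + (1 - l) * (x2 / c2) = (s * x1 + t * x2) / C" for x1 x2
      using c C unfolding l by (simp add: l_def field_simps)
    have normal: "1 \<le> (a / c) powr q + (b / c) powr q"
      if "0 \<le> a" "0 \<le> b" "0 < c" "c powr q \<le> a powr q + b powr q" for a b c :: real
      using that by (simp add: powr_divide add_divide_distrib[symmetric])
    have conc:
      "l * (x1 / c1) powr q + (1 - l) * (x2 / c2) powr q \<le> ((s * x1 + t * x2) / C) powr q"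
      if "0 \<le> x1" "0 \<le> x2" for x1 x2
      unfolding comb[symmetric]
      using concave_on_powr[OF q, unfolded concave_on_iff, THEN conjunct2, rule_format,
          of "x1 / c1" "x2 / c2" l "1 - l"] that l(1,2) c
      by simp
    have "(1::real) = l * 1 + (1 - l) * 1" by simp
    also have "\<dots> \<le> l * ((a1 / c1) powr q + (b1 / c1) powr q)
                    + (1 - l) * ((a2 / c2) powr q + (b2 / c2) powr q)"
      using normal[OF nn(1,2) c(1) h1] normal[OF nn(4,5) c(2) h2] l(1,2)
      by (intro add_mono mult_left_mono) auto
    also have "\<dots> \<le> (A / C) powr q + (B / C) powr q"
      using conc[of a1 a2] conc[of b1 b2] nn unfolding A_def B_def by (simp add: algebra_simps)
    finally have "(C * 1) powr q \<le> (C * (A / C)) powr q + (C * (B / C)) powr q"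
      using C nn st unfolding A_def B_def by (intro powr_triangle_scale) auto
    then show ?thesis using C by simp
  qed
  then show "(s * c1 + t * c2) powr q \<le> (s * a1 + t * a2) powr q + (s * b1 + t * b2) powr q"
    by (simp add: A_def B_def C_def)
qed

lemma psd_add:
  assumes "psd A" "psd B"
  shows "psd (A + B)"
proof -
  have "transpose (A + B) = transpose A + transpose B"
    by (simp add: transpose_def vec_eq_iff)
  with assms show ?thesis
    by (simp add: psd_def matrix_vector_mult_add_rdistrib inner_add_right add_nonneg_nonneg)
qed

lemma psd_scaleR:
  assumes "0 \<le> c" "psd A"
  shows "psd (c *\<^sub>R A)"
  using assms by (simp add: psd_def transpose_scalar flip: scaleR_matrix_vector_assoc)

lemma convex_psd_diff: "convex {Z::real^'n^'n. psd (A - Z)}"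
proof (rule convexI, clarsimp)
  fix Z1 Z2 :: "real^'n^'n" and u v :: real
  assume "psd (A - Z1)" "psd (A - Z2)" "0 \<le> u" "0 \<le> v" "u + v = 1"
  moreover from \<open>u + v = 1\<close> have "A - (u *\<^sub>R Z1 + v *\<^sub>R Z2) = u *\<^sub>R (A - Z1) + v *\<^sub>R (A - Z2)"
    by (simp add: algebra_simps flip: scaleR_add_left)
  ultimately show "psd (A - (u *\<^sub>R Z1 + v *\<^sub>R Z2))"
    by (simp add: psd_add psd_scaleR)
qed

lemma FBS_feasible_eq_Int:
  "(FBS_feasible p c :: (real^('n::{finite,linorder})^('n::{finite,linorder})) set) =
     sym_nonneg
   \<inter> (\<Inter>i. \<Inter>j. \<Inter>k. (\<lambda>Z. (Z $ i $ j, Z $ j $ k, Z $ i $ k)) -`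
        {(a, b, c). 0 \<le> a \<and> 0 \<le> b \<and> 0 \<le> c \<and> c powr (p/2) \<le> a powr (p/2) + b powr (p/2)})
   \<inter> (\<lambda>Z. \<Sum>(i,j)\<in>{(i,j). i < j}. Z $ i $ j) -`
        {c * (1 - c) * (real CARD('n::{finite,linorder}))\<^sup>2..}
   \<inter> (\<Inter>i. (\<lambda>Z. Z $ i $ i) -` {0})
   \<inter> {Z. psd (ones_mat - Z)}"
  by (intro set_eqI) (simp add: FBS_feasible_def sym_nonneg_def split_def all_conj_distrib, blast)

lemma convex_FBS_feasible:
  assumes "0 \<le> p" "p \<le> 2"
  shows "convex (FBS_feasible p c)"
  unfolding FBS_feasible_eq_Int
proof (intro convex_Int convex_INT convex_linear_vimage)
  show "convex {(a, b, c). 0 \<le> a \<and> 0 \<le> b \<and> 0 \<le> c \<and> c powr (p/2) \<le> a powr (p/2) + b powr (p/2)}"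
    using assms by (intro convex_powr_triangle) auto
qed (auto intro!: linearI convex_sym_nonneg convex_psd_diff
          simp: sum.distrib sum_distrib_left split_def)

theorem mainTheorem1:
  fixes p c :: real and E :: "'n::{finite,linorder} set set"
  assumes "0 < p" "p < 2"
    and "\<forall>e\<in>E. \<exists>i j. i \<noteq> j \<and> e = {i, j}"
  shows "convex (sym_nonneg :: (real^('n::{finite,linorder})^('n::{finite,linorder})) set)
     \<and> concave_on sym_nonneg (FBS_obj p E)
     \<and> convex (FBS_feasible p c :: (real^('n::{finite,linorder})^('n::{finite,linorder})) set)"
  using assms(1,2) by (simp add: convex_sym_nonneg concave_on_FBS_obj convex_FBS_feasible)

end
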